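(* Let $d\ge3$, $\gamma\in[1,2]$, $\rho_0>0$, and let $\rho$ be the Lane–Emden profile with central density $\rho_0$ on $[0,R_g)$. Then for all $r\in[0,R_g)$: if $\gamma\in[1,2)$, $\rho(r)\le\Big(\rho_0^{-(2-\gamma)}+\frac{2\pi}{d}\frac{2-\gamma}{\gamma}r^2\Big)^{-1/(2-\gamma)}$; if $\gamma=2$, $\rho(r)\le\exp\big(\ln\rho_0-\frac{2\pi}{d}\frac{1}{\gamma}r^2\big)=\rho_0e^{-\pi r^2/d}$. Equivalently, for $\gamma>1$ with $w=\rho^{\gamma-1}$, $w_0=\rho_0^{\gamma-1}$, $\alpha=1/(\gamma-1)$: $w(r)\le\big(w_0^{-(\alpha-1)}+\frac{2\pi}{d}\frac{2-\gamma}{\gamma}r^2\big)^{-1/(\alpha-1)}$ if $\alpha\ne1$ and $w(r)\le\exp\big(\ln w_0-\frac{2\pi}{d}\frac{\gamma-1}{\gamma}r^2\big)$ if $\alpha=1$; and for $\gamma=1$ with $h=\ln\rho$, $h_0=\ln\rho_0$: $h(r)\le-\ln\big(e^{-h_0}+\frac{2\pi}{d}r^2\big)$.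
   Context: Fix an integer $d\ge 3$ and $\gamma\in[1,2]$. For $\rho_0>0$, the (radial, gaseous) Lane–Emden profile with central density $\rho_0$ is the unique continuous function $\rho:[0,R_g)\to(0,\infty)$, defined on its maximal interval of existence $[0,R_g)$, $R_g\in(0,\infty]$, with $\rho(0)=\rho_0$ and, writing $m(r)=4\pi\int_0^r y^{d-1}\rho(y)\,dy$, $\frac{d}{dr}\big(\rho(r)^\gamma\big)=-\rho(r)\,m(r)/r^{d-1}$ for $0<r<R_g$ (equivalently: for $\gamma>1$, $w=\rho^{\gamma-1}$ satisfies $w'(r)=-4\pi\frac{\gamma-1}{\gamma}r^{1-d}\int_0^r y^{d-1}w(y)^{\alpha}dy$ with $\alpha=1/(\gamma-1)$; for $\gamma=1$, $h=\ln\rho$ satisfies $h'(r)=-4\pi r^{1-d}\int_0^r y^{d-1}e^{h(y)}dy$). *)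

theory Defs
  imports "HOL-Analysis.Analysis"
begin

definition le_mass :: "nat \<Rightarrow> (real \<Rightarrow> real) \<Rightarrow> real \<Rightarrow> real" where
  "le_mass d \<rho> r = 4 * pi * integral {0..r} (\<lambda>y. y ^ (d - 1) * \<rho> y)"

definition le_solution :: "nat \<Rightarrow> real \<Rightarrow> real \<Rightarrow> (real \<Rightarrow> real) \<Rightarrow> ereal \<Rightarrow> bool" where
  "le_solution d \<gamma> \<rho>0 \<rho> R \<longleftrightarrow>
     R > 0 \<and>
     continuous_on {r. 0 \<le> r \<and> ereal r < R} \<rho> \<and>
     (\<forall>r. 0 \<le> r \<and> ereal r < R \<longrightarrow> \<rho> r > 0) \<and>
     \<rho> 0 = \<rho>0 \<and>
     (\<forall>r. 0 < r \<and> ereal r < R \<longrightarrow>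
        ((\<lambda>s. \<rho> s powr \<gamma>) has_real_derivative
           (- \<rho> r * le_mass d \<rho> r / r ^ (d - 1))) (at r))"

text \<open>The Lane-Emden profile: a solution on its maximal interval of existence [0,Rg),
  i.e. it admits no extension to a solution on a strictly larger interval [0,R').\<close>
definition lane_emden_profile :: "nat \<Rightarrow> real \<Rightarrow> real \<Rightarrow> (real \<Rightarrow> real) \<Rightarrow> ereal \<Rightarrow> bool" where
  "lane_emden_profile d \<gamma> \<rho>0 \<rho> Rg \<longleftrightarrow>
     le_solution d \<gamma> \<rho>0 \<rho> Rg \<and>
     \<not> (\<exists>R' \<rho>'. R' > Rg \<and> le_solution d \<gamma> \<rho>0 \<rho>' R' \<and>
           (\<forall>r. 0 \<le> r \<and> ereal r < Rg \<longrightarrow> \<rho>' r = \<rho> r))"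

end

theory Submission
  imports Defs
begin

text \<open>Since the mass is nonnegative, \<open>\<rho>\<^sup>\<gamma>\<close> and hence \<open>\<rho>\<close> decrease, so the mass inside
  radius \<open>s\<close> is at least that of the homogeneous ball of density \<open>\<rho>(s)\<close>:
  \<open>m(s) \<ge> 4\<pi> \<rho>(s) s\<^sup>d / d\<close>. For \<open>f = \<rho>\<^sup>\<gamma>\<close> this gives the differential inequality
  \<open>f' \<le> -K s f\<^sup>1\<^sup>+\<^sup>c\<close> with \<open>K = 4\<pi>/d\<close> and \<open>c = (2 - \<gamma>)/\<gamma>\<close>. For \<open>c > 0\<close> it makes
  \<open>f\<^sup>-\<^sup>c - c K s\<^sup>2/2\<close> increasing, for \<open>c = 0\<close> it makes \<open>ln f + K s\<^sup>2/2\<close> decreasing;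
  comparing the values at \<open>0\<close> and \<open>r\<close> yields the two bounds.\<close>

lemma has_integral_power_atLeastAtMost:
  fixes b :: real
  assumes "0 \<le> b"
  shows "((\<lambda>y. y ^ k) has_integral b ^ Suc k / Suc k) {0..b}"
proof -
  have "((\<lambda>y. y ^ k) has_integral b ^ Suc k / Suc k - 0 ^ Suc k / Suc k) {0..b}"
  proof (rule fundamental_theorem_of_calculus)
    fix x :: real
    have "((\<lambda>y. y ^ Suc k / Suc k) has_real_derivative real (Suc k) * x ^ k / Suc k) (at x)"
      using DERIV_pow[of "Suc k" x] by (intro DERIV_cdivide) simp
    then have "((\<lambda>y. y ^ Suc k / Suc k) has_real_derivative x ^ k) (at x)"
      by (simp del: of_nat_Suc)
    then show "((\<lambda>y. y ^ Suc k / Suc k) has_vector_derivative x ^ k) (at x within {0..b})"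
      by (simp add: has_real_derivative_iff_has_vector_derivative has_vector_derivative_at_within)
  qed (use assms in auto)
  then show ?thesis by simp
qed

lemma differential_inequality_powr_bound:
  fixes f D :: "real \<Rightarrow> real" and K c r :: real
  assumes "0 \<le> r" "0 < c"
    and cont: "continuous_on {0..r} f"
    and pos: "\<And>s. 0 \<le> s \<Longrightarrow> s \<le> r \<Longrightarrow> f s > 0"
    and deriv: "\<And>x. 0 < x \<Longrightarrow> x < r \<Longrightarrow> (f has_real_derivative D x) (at x)"
    and bound: "\<And>x. 0 < x \<Longrightarrow> x < r \<Longrightarrow> D x \<le> - K * x * f x powr (1 + c)"
  shows "f 0 powr (-c) + c * K / 2 * r\<^sup>2 \<le> f r powr (-c)"
proof -
  define F where "F s = f s powr (-c) - c * K / 2 * s\<^sup>2" for s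
  have "F 0 \<le> F r"
  proof (rule DERIV_nonneg_imp_increasing_open[OF \<open>0 \<le> r\<close>])
    fix x assume x: "0 < x" "x < r"
    have fx: "f x > 0" using pos x by auto
    have F': "(F has_real_derivative -c * f x powr (-c - 1) * D x - c * K / 2 * (2 * x)) (at x)"
      unfolding F_def
      by (intro DERIV_diff DERIV_fun_powr[OF deriv[OF x] fx]) (auto intro!: derivative_eq_intros deriv[OF x] fx)
    have "c * f x powr (-c - 1) * D x \<le> c * f x powr (-c - 1) * (- K * x * f x powr (1 + c))"
      using bound[OF x] \<open>0 < c\<close> by (intro mult_left_mono) auto
    also have "\<dots> = - c * K * x"
      using fx by (simp add: powr_add[symmetric])
    finally have "-c * f x powr (-c - 1) * D x - c * K / 2 * (2 * x) \<ge> 0"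
      by simp
    with F' show "\<exists>y. (F has_real_derivative y) (at x) \<and> 0 \<le> y" by blast
  next
    show "continuous_on {0..r} F"
      unfolding F_def using cont pos by (intro continuous_intros) (auto simp: less_imp_neq[symmetric])
  qed
  then show ?thesis by (simp add: F_def)
qed

lemma differential_inequality_ln_bound:
  fixes f D :: "real \<Rightarrow> real" and K r :: real
  assumes "0 \<le> r"
    and cont: "continuous_on {0..r} f"
    and pos: "\<And>s. 0 \<le> s \<Longrightarrow> s \<le> r \<Longrightarrow> f s > 0"
    and deriv: "\<And>x. 0 < x \<Longrightarrow> x < r \<Longrightarrow> (f has_real_derivative D x) (at x)"
    and bound: "\<And>x. 0 < x \<Longrightarrow> x < r \<Longrightarrow> D x \<le> - K * x * f x"
  shows "ln (f r) \<le> ln (f 0) - K / 2 * r\<^sup>2"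
proof -
  define F where "F s = ln (f s) + K / 2 * s\<^sup>2" for s
  have "F r \<le> F 0"
  proof (rule DERIV_nonpos_imp_decreasing_open[OF \<open>0 \<le> r\<close>])
    fix x assume x: "0 < x" "x < r"
    have fx: "f x > 0" using pos x by auto
    have "(F has_real_derivative D x / f x + K / 2 * (2 * x)) (at x)"
      unfolding F_def using deriv[OF x] fx by (auto intro!: derivative_eq_intros)
    moreover have "D x / f x + K / 2 * (2 * x) \<le> 0"
      using bound[OF x] fx by (simp add: divide_simps)
    ultimately show "\<exists>y. (F has_real_derivative y) (at x) \<and> y \<le> 0" by blast
  next
    show "continuous_on {0..r} F"
      unfolding F_def using cont pos by (intro continuous_intros) (auto simp: less_imp_neq[symmetric])
  qed
  then show ?thesis by (simp add: F_def)
qed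

locale lane_emden_on_interval =
  fixes d :: nat and \<gamma> :: real and \<rho> :: "real \<Rightarrow> real" and r :: real
  assumes dim_pos: "1 \<le> d" and gamma_ge_1: "1 \<le> \<gamma>" and radius_nonneg: "0 \<le> r"
    and continuous: "continuous_on {0..r} \<rho>"
    and positive: "\<And>s. 0 \<le> s \<Longrightarrow> s \<le> r \<Longrightarrow> 0 < \<rho> s"
    and pressure_deriv: "\<And>s. 0 < s \<Longrightarrow> s < r \<Longrightarrow>
       ((\<lambda>s. \<rho> s powr \<gamma>) has_real_derivative - \<rho> s * le_mass d \<rho> s / s ^ (d - 1)) (at s)"
begin

lemma continuous_on_subinterval: "0 \<le> a \<Longrightarrow> b \<le> r \<Longrightarrow> continuous_on {a..b} \<rho>"
  by (rule continuous_on_subset[OF continuous]) auto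

lemma pressure_pos: "0 \<le> s \<Longrightarrow> s \<le> r \<Longrightarrow> 0 < \<rho> s powr \<gamma>"
  using positive by (simp add: less_imp_neq[symmetric])

lemma pressure_continuous: "continuous_on {0..r} (\<lambda>s. \<rho> s powr \<gamma>)"
  using continuous positive by (intro continuous_intros) (auto simp: less_imp_neq[symmetric])

lemma weighted_density_integrable:
  "0 \<le> s \<Longrightarrow> s \<le> r \<Longrightarrow> (\<lambda>y. y ^ (d - 1) * \<rho> y) integrable_on {0..s}"
  using continuous_on_subinterval
  by (intro integrable_continuous_interval continuous_intros) auto

lemma le_mass_nonneg: "0 \<le> s \<Longrightarrow> s \<le> r \<Longrightarrow> 0 \<le> le_mass d \<rho> s"
  unfolding le_mass_def using weighted_density_integrable positive
  by (intro mult_nonneg_nonneg integral_nonneg) (auto intro!: mult_nonneg_nonneg less_imp_le)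

lemma density_antimono:
  assumes "0 \<le> a" "a \<le> b" "b \<le> r"
  shows "\<rho> b \<le> \<rho> a"
proof -
  have "\<rho> b powr \<gamma> \<le> \<rho> a powr \<gamma>"
  proof (rule DERIV_nonpos_imp_decreasing_open[OF \<open>a \<le> b\<close>])
    fix x assume x: "a < x" "x < b"
    have "- \<rho> x * le_mass d \<rho> x / x ^ (d - 1) \<le> 0"
      using positive[of x] le_mass_nonneg[of x] x assms
      by (intro divide_nonpos_nonneg) (auto simp: mult_nonneg_nonneg)
    then show "\<exists>y. ((\<lambda>s. \<rho> s powr \<gamma>) has_real_derivative y) (at x) \<and> y \<le> 0"
      using pressure_deriv[of x] x assms by auto
  next
    show "continuous_on {a..b} (\<lambda>s. \<rho> s powr \<gamma>)"
      using pressure_continuous by (rule continuous_on_subset) (use assms in auto)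
  qed
  then show ?thesis
    using powr_less_mono2[of \<gamma> "\<rho> a" "\<rho> b"] positive[of a] assms gamma_ge_1 by fastforce
qed

lemma le_mass_ge_homogeneous:
  assumes "0 \<le> s" "s \<le> r"
  shows "4 * pi * \<rho> s * s ^ d / d \<le> le_mass d \<rho> s"
proof -
  have "Suc (d - 1) = d" using dim_pos by simp
  then have hom: "((\<lambda>y. y ^ (d - 1) * \<rho> s) has_integral s ^ d / d * \<rho> s) {0..s}"
    using has_integral_power_atLeastAtMost[OF \<open>0 \<le> s\<close>, of "d - 1"]
    by (metis has_integral_mult_left)
  have "s ^ d / d * \<rho> s \<le> integral {0..s} (\<lambda>y. y ^ (d - 1) * \<rho> y)"
  proof (rule has_integral_le[OF hom integrable_integral[OF weighted_density_integrable[OF assms]]])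
    fix y assume "y \<in> {0..s}"
    then show "y ^ (d - 1) * \<rho> s \<le> y ^ (d - 1) * \<rho> y"
      using density_antimono[of y s] assms by (intro mult_left_mono) auto
  qed
  then have "4 * pi * (s ^ d / d * \<rho> s) \<le> 4 * pi * integral {0..s} (\<lambda>y. y ^ (d - 1) * \<rho> y)"
    by (intro mult_left_mono) auto
  then show ?thesis
    unfolding le_mass_def by (simp add: algebra_simps)
qed

lemma pressure_deriv_le:
  assumes "0 < x" "x < r"
  shows "- \<rho> x * le_mass d \<rho> x / x ^ (d - 1) \<le> - (4 * pi / d) * x * \<rho> x ^ 2"
proof -
  have "x ^ d = x * x ^ (d - 1)"
    using dim_pos by (metis Suc_diff_le diff_Suc_1 power_Suc)
  then have "(4 * pi / d) * x * \<rho> x ^ 2 * x ^ (d - 1) = \<rho> x * (4 * pi * \<rho> x * x ^ d / d)"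
    by (simp add: power2_eq_square)
  also have "\<dots> \<le> \<rho> x * le_mass d \<rho> x"
    using le_mass_ge_homogeneous[of x] positive[of x] assms by (intro mult_left_mono) auto
  finally show ?thesis
    using assms by (simp add: pos_le_divide_eq)
qed

lemma density_bound_subcritical:
  assumes "\<gamma> < 2"
  shows "\<rho> r \<le> (\<rho> 0 powr (-(2 - \<gamma>)) + (2 * pi / d) * ((2 - \<gamma>) / \<gamma>) * r\<^sup>2) powr (-1 / (2 - \<gamma>))"
proof -
  define c where "c = (2 - \<gamma>) / \<gamma>"
  have c_pos: "0 < c" and gamma_c: "\<gamma> * (1 + c) = 2" "\<gamma> * - c = - (2 - \<gamma>)"
    using assms gamma_ge_1 by (auto simp: c_def field_simps)
  have "(\<rho> 0 powr \<gamma>) powr (-c) + c * (4 * pi / d) / 2 * r\<^sup>2 \<le> (\<rho> r powr \<gamma>) powr (-c)"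
  proof (rule differential_inequality_powr_bound[OF radius_nonneg c_pos pressure_continuous])
    fix x assume x: "0 < x" "x < r"
    have "(\<rho> x powr \<gamma>) powr (1 + c) = \<rho> x ^ 2"
      using positive[of x] x gamma_c by (simp add: powr_powr)
    then show "- \<rho> x * le_mass d \<rho> x / x ^ (d - 1) \<le> - (4 * pi / d) * x * (\<rho> x powr \<gamma>) powr (1 + c)"
      using pressure_deriv_le[OF x] by simp
  qed (fact pressure_pos pressure_deriv)+
  moreover have "(\<rho> s powr \<gamma>) powr (-c) = \<rho> s powr (-(2 - \<gamma>))" for s
    by (simp only: powr_powr gamma_c)
  moreover have "c * (4 * pi / d) / 2 = (2 * pi / d) * ((2 - \<gamma>) / \<gamma>)"
    using gamma_ge_1 dim_pos by (simp add: c_def field_simps)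
  ultimately have lower:
    "\<rho> 0 powr (-(2 - \<gamma>)) + (2 * pi / d) * ((2 - \<gamma>) / \<gamma>) * r\<^sup>2 \<le> \<rho> r powr (-(2 - \<gamma>))"
    by (simp only:)
  have base_pos: "0 < \<rho> 0 powr (-(2 - \<gamma>)) + (2 * pi / d) * ((2 - \<gamma>) / \<gamma>) * r\<^sup>2"
    using positive[of 0] radius_nonneg assms gamma_ge_1 by (intro add_pos_nonneg) auto
  have "-(2 - \<gamma>) * (-1 / (2 - \<gamma>)) = 1"
    using assms by (simp add: field_simps)
  then have "\<rho> r = (\<rho> r powr (-(2 - \<gamma>))) powr (-1 / (2 - \<gamma>))"
    using positive[of r] radius_nonneg by (simp only: powr_powr) simp
  also have "\<dots> \<le> (\<rho> 0 powr (-(2 - \<gamma>)) + (2 * pi / d) * ((2 - \<gamma>) / \<gamma>) * r\<^sup>2) powr (-1 / (2 - \<gamma>))"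
    using assms by (intro powr_mono2'[OF _ base_pos lower]) simp
  finally show ?thesis .
qed

lemma density_bound_critical:
  assumes "\<gamma> = 2"
  shows "\<rho> r \<le> exp (ln (\<rho> 0) - (2 * pi / d) * (1 / \<gamma>) * r\<^sup>2)"
proof -
  have "ln (\<rho> r powr \<gamma>) \<le> ln (\<rho> 0 powr \<gamma>) - (4 * pi / d) / 2 * r\<^sup>2"
  proof (rule differential_inequality_ln_bound[OF radius_nonneg pressure_continuous])
    fix x assume x: "0 < x" "x < r"
    show "- \<rho> x * le_mass d \<rho> x / x ^ (d - 1) \<le> - (4 * pi / d) * x * \<rho> x powr \<gamma>"
      using pressure_deriv_le[OF x] positive[of x] x assms by simp
  qed (fact pressure_pos pressure_deriv)+
  then have "ln (\<rho> r) \<le> ln (\<rho> 0) - (2 * pi / d) * (1 / \<gamma>) * r\<^sup>2"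
    using assms positive[of 0] positive[of r] radius_nonneg by (simp add: ln_powr)
  then have "exp (ln (\<rho> r)) \<le> exp (ln (\<rho> 0) - (2 * pi / d) * (1 / \<gamma>) * r\<^sup>2)"
    by simp
  then show ?thesis
    using positive[of r] radius_nonneg by simp
qed

end

lemma le_solution_on_interval:
  assumes "le_solution d \<gamma> \<rho>0 \<rho> R" "1 \<le> d" "1 \<le> \<gamma>" "0 \<le> r" "ereal r < R"
  shows "lane_emden_on_interval d \<gamma> \<rho> r"
proof -
  have inside: "ereal s < R" if "s \<le> r" for s
    using that assms(5) by (meson ereal_less_eq(3) order.strict_trans1)
  note solution = assms(1)[unfolded le_solution_def]
  show ?thesis
  proof
    show "continuous_on {0..r} \<rho>"
      using solution by (rule continuous_on_subset[OF conjunct1[OF conjunct2]]) (auto intro: inside)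
  qed (use assms(2-4) solution inside in \<open>auto intro: less_imp_le\<close>)
qed

theorem mainTheorem6:
  fixes d :: nat and \<gamma> \<rho>0 :: real and \<rho> :: "real \<Rightarrow> real" and Rg :: ereal and r :: real
  assumes "d \<ge> 3" and "1 \<le> \<gamma>" and "\<gamma> \<le> 2" and "\<rho>0 > 0"
    and "lane_emden_profile d \<gamma> \<rho>0 \<rho> Rg"
    and "0 \<le> r" and "ereal r < Rg"
  shows "(\<gamma> < 2 \<longrightarrow> \<rho> r \<le> (\<rho>0 powr (-(2 - \<gamma>)) + (2 * pi / d) * ((2 - \<gamma>) / \<gamma>) * r\<^sup>2)
                          powr (-1 / (2 - \<gamma>)))
       \<and> (\<gamma> = 2 \<longrightarrow> \<rho> r \<le> exp (ln \<rho>0 - (2 * pi / d) * (1 / \<gamma>) * r\<^sup>2))"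
proof -
  have solution: "le_solution d \<gamma> \<rho>0 \<rho> Rg"
    using assms(5) by (simp add: lane_emden_profile_def)
  then interpret lane_emden_on_interval d \<gamma> \<rho> r
    using assms by (intro le_solution_on_interval) auto
  have "\<rho> 0 = \<rho>0"
    using solution by (simp add: le_solution_def)
  then show ?thesis
    using density_bound_subcritical density_bound_critical by simp
qed

end
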